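(* For every integer $k>20$, the $(2k+2)\times(2k+2)$ Toeplitz matrix $B_k$ whose first column is $(1,1,0,\dots,0)^T$ (with $2k$ trailing zeros) and whose first row is $(1,\underbrace{0,\dots,0}_{k},(-1)^k,(-1)^k,\underbrace{0,\dots,0}_{k-1})$ has an eigenvalue with negative real part. *)

theory Defs
  imports Complex_Main "Jordan_Normal_Form.Char_Poly"
begin

definition toeplitz :: "nat \<Rightarrow> (int \<Rightarrow> 'a) \<Rightarrow> 'a mat" where
  "toeplitz n t = mat n n (\<lambda>(i,j). t (int j - int i))"

text \<open>Symbol of B_k: first column (1,1,0,...,0), first row
  (1, 0 (k times), (-1)^k, (-1)^k, 0 (k-1 times)).\<close>
definition B_symbol :: "nat \<Rightarrow> int \<Rightarrow> complex" where
  "B_symbol k d = (if d = 0 then 1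
                   else if d = -1 then 1
                   else if d = int k + 1 \<or> d = int k + 2 then (-1) ^ k
                   else 0)"

definition B_mat :: "nat \<Rightarrow> complex mat" where
  "B_mat k = toeplitz (2 * k + 2) (B_symbol k)"

end

theory Submission
  imports Defs "HOL-Analysis.Analysis"
begin

(*
  If z satisfies z^(k+3) = (k+1) z - k, then 1 - z is an eigenvalue of B_k. An eigenvector is
  x_i = (-1)^i w_i with w_i = (i+1)(z-1) z^(k-1-i) for i < k and w_i = z^(2k+2-i) for i >= k:
  the sign twist turns the eigenvalue equation into the recurrence
  z w_i = w_(i-1) + w_(i+k+1) - w_(i+k+2), and the trinomial equation is exactly what makes it
  hold at i = k.

  It remains to find such a z with Re z > 1. Substituting z = 1 + s/(k+3), the equation becomes
  approximately e^s = 1 + s, whose first non-real root s ~ 2.09 + 7.46i has positive real part.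
  Accordingly, z is found by Brouwer's theorem as a fixed point of the branch
  z |-> exp ((Ln ((k+1) z - k) + 2 pi i) / (k+3)) of the (k+3)-th root, which for k > 20 maps the
  box 1 + ([0.2, 8] x [6.1, 11]) / (k+3) into itself.
*)

(* frees $ for the vector indexing of Jordan_Normal_Form *)
unbundle no vec_syntax

lemma B_symbol_diff:
  "B_symbol k (int j - int i) =
     (if j = i then 1 else 0) + (if j + 1 = i then 1 else 0)
   + (-1)^k * ((if j = i+k+1 then 1 else 0) + (if j = i+k+2 then 1 else 0))"
  unfolding B_symbol_def by (simp split: if_splits)

lemma B_mat_mult_vec_nth:
  fixes f :: "nat \<Rightarrow> complex"
  assumes i: "i < 2*k+2"
  shows "(B_mat k *\<^sub>v Matrix.vec (2*k+2) f) $ i =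
           (if 0 < i then f (i-1) else 0) + f i
         + (-1)^k * ((if i+k+1 < 2*k+2 then f (i+k+1) else 0)
                   + (if i+k+2 < 2*k+2 then f (i+k+2) else 0))"
proof -
  have delta: "(\<Sum>j<2*k+2. if j = c then f j else 0) = (if c < 2*k+2 then f c else 0)" for c
    by (simp add: sum.delta')
  have pred: "(\<Sum>j<2*k+2. if j + 1 = i then f j else 0) = (if 0 < i then f (i-1) else 0)"
    using i by (cases i) (simp_all add: sum.delta')
  have "(B_mat k *\<^sub>v Matrix.vec (2*k+2) f) $ i = (\<Sum>j<2*k+2. B_symbol k (int j - int i) * f j)"
    using i by (simp add: B_mat_def toeplitz_def scalar_prod_def atLeast0LessThan)
  also have "\<dots> = (\<Sum>j<2*k+2. (if j = i then f j else 0) + (if j + 1 = i then f j else 0)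
      + (-1)^k * ((if j = i+k+1 then f j else 0) + (if j = i+k+2 then f j else 0)))"
    unfolding B_symbol_diff by (intro sum.cong) (auto simp: algebra_simps)
  also have "\<dots> = (if 0 < i then f (i-1) else 0) + f i
         + (-1)^k * ((if i+k+1 < 2*k+2 then f (i+k+1) else 0)
                   + (if i+k+2 < 2*k+2 then f (i+k+2) else 0))"
    unfolding sum.distrib sum_distrib_left[symmetric] delta pred using i by simp
  finally show ?thesis .
qed

definition eigvec_coeff :: "nat \<Rightarrow> complex \<Rightarrow> nat \<Rightarrow> complex" where
  "eigvec_coeff k z i = (if i < k then of_nat (i+1) * (z-1) * z^(k-1-i) else z^(2*k+2-i))"

lemma eigvec_coeff_recurrence:
  assumes root: "z^(k+3) = of_nat (k+1) * z - of_nat k" and i: "i < 2*k+2"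
  shows "z * eigvec_coeff k z i =
           (if 0 < i then eigvec_coeff k z (i-1) else 0)
         + (if i+k+1 < 2*k+2 then eigvec_coeff k z (i+k+1) else 0)
         - (if i+k+2 < 2*k+2 then eigvec_coeff k z (i+k+2) else 0)"
proof -
  let ?w = "eigvec_coeff k z"
  consider "i < k" | "i = k" | "k < i" by linarith
  then show ?thesis
  proof cases
    case 1
    define d where "d = k - i - 1"
    have k: "k = i + 1 + d" using 1 unfolding d_def by simp
    have w: "?w i = of_nat (i+1) * (z-1) * z^d" "?w (i+k+1) = z^(d+2)" "?w (i+k+2) = z^(d+1)"
      "0 < i \<Longrightarrow> ?w (i-1) = of_nat i * (z-1) * z^(d+1)"
      unfolding eigvec_coeff_def k by (auto simp: Suc_diff_Suc)
    have "z * (of_nat (i+1) * (z-1) * z^d) = of_nat i * (z-1) * z^(d+1) + z^(d+2) - z^(d+1)"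
      by (simp add: algebra_simps)
    then show ?thesis using w k by auto
  next
    case 2
    have "(if 0 < i then ?w (i-1) else 0) = of_nat k * (z-1)"
      using 2 by (cases k) (auto simp: eigvec_coeff_def)
    moreover have "?w i = z^(k+2)" "?w (i+k+1) = z" "\<not> i+k+2 < 2*k+2"
      using 2 by (auto simp: eigvec_coeff_def)
    moreover have "z * z^(k+2) = of_nat k * (z-1) + z"
    proof -
      have "z * z^(k+2) = z^(k+3)" by (simp add: power_add power2_eq_square power3_eq_cube)
      then show ?thesis using root by (simp add: algebra_simps)
    qed
    ultimately show ?thesis using 2 by simp
  next
    case 3
    have "?w i = z^(2*k+2-i)" "?w (i-1) = z * z^(2*k+2-i)"
      using 3 i unfolding eigvec_coeff_def by (auto simp flip: power_Suc simp: Suc_diff_le)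
    then show ?thesis using 3 i by auto
  qed
qed

lemma eigenvalue_B_mat_one_minus_root:
  assumes root: "z^(k+3) = of_nat (k+1) * z - of_nat k" and z: "z \<noteq> 0"
  shows "eigenvalue (B_mat k) (1 - z)"
proof -
  let ?w = "eigvec_coeff k z"
  define v where "v = Matrix.vec (2*k+2) (\<lambda>i. (-1)^i * ?w i)"
  have "B_mat k *\<^sub>v v = (1 - z) \<cdot>\<^sub>v v"
  proof (rule eq_vecI)
    fix i assume "i < dim_vec ((1 - z) \<cdot>\<^sub>v v)"
    then have i: "i < 2*k+2" by (simp add: v_def)
    have pred_sign: "(if 0 < i then (-1)^(i-1) * a else 0) = - ((-1)^i * (if 0 < i then a else 0))"
      for a :: complex by (cases i) simp_all
    have shift_sign: "(-1)^k * ((if P then (-1)^(i+k+1) * b else 0) + (if Q then (-1)^(i+k+2) * c else 0))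
        = (-1)^i * ((if Q then c else 0) - (if P then b else 0))" for P Q and b c :: complex
    proof -
      have "(-1::complex)^k * (-1)^k = 1" by (simp flip: power_add)
      then show ?thesis by (simp add: power_add algebra_simps)
    qed
    have "(B_mat k *\<^sub>v v) $ i = (if 0 < i then (-1)^(i-1) * ?w (i-1) else 0) + (-1)^i * ?w i
        + (-1)^k * ((if i+k+1 < 2*k+2 then (-1)^(i+k+1) * ?w (i+k+1) else 0)
                  + (if i+k+2 < 2*k+2 then (-1)^(i+k+2) * ?w (i+k+2) else 0))"
      unfolding v_def B_mat_mult_vec_nth[OF i] by simp
    also have "\<dots> = (-1)^i * (?w i - z * ?w i)"
      unfolding pred_sign shift_sign eigvec_coeff_recurrence[OF root i] by (simp add: algebra_simps)
    also have "\<dots> = ((1 - z) \<cdot>\<^sub>v v) $ i"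
      using i by (simp add: v_def algebra_simps)
    finally show "(B_mat k *\<^sub>v v) $ i = ((1 - z) \<cdot>\<^sub>v v) $ i" .
  qed (simp add: v_def B_mat_def toeplitz_def)
  moreover have "v \<noteq> 0\<^sub>v (2*k+2)"
  proof
    assume "v = 0\<^sub>v (2*k+2)"
    then have "v $ (2*k+1) = 0" by simp
    then show False using z by (simp add: v_def eigvec_coeff_def)
  qed
  ultimately show ?thesis
    unfolding eigenvalue_def eigenvector_def
    by (intro exI[of _ v]) (simp add: v_def B_mat_def toeplitz_def)
qed

lemma cos_ge_one_minus_sq_half: "1 - x^2/2 \<le> cos (x::real)"
proof -
  have "sin (x/2)^2 \<le> (x/2)^2"
    using abs_sin_x_le_abs_x[of "x/2"] by (metis abs_ge_zero power2_abs power_mono)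
  then show ?thesis
    using cos_double_sin[of "x/2"] by (simp add: power_divide)
qed

lemma sin_ge_minus_cube_sixth:
  assumes "0 \<le> (x::real)"
  shows "x - x^3/6 \<le> sin x"
proof -
  have "\<bar>sin x - (\<Sum>m<3. sin_coeff m * x ^ m)\<bar> \<le> inverse (fact 3) * \<bar>x\<bar> ^ 3"
    by (rule Maclaurin_sin_bound)
  moreover have "(\<Sum>m<3. sin_coeff m * x ^ m) = x" "inverse (fact 3 :: real) = 1/6"
    by (simp_all add: eval_nat_numeral sin_coeff_def)
  ultimately have "\<bar>sin x - x\<bar> \<le> x^3/6"
    using assms by simp
  then show ?thesis using abs_le_iff[of "sin x - x" "x^3/6"] by linarith
qed

lemma exp_mult_small_bounds:
  fixes a u :: real
  assumes u: "0 < u" "u \<le> 1/24" and a: "1.6 \<le> a" "a \<le> 6"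
  shows "1 + 1.6*u \<le> exp (a*u)" "exp (a*u) \<le> 1 + 8*u"
proof -
  have "1 + 1.6*u \<le> 1 + a*u" using u a by simp
  also have "\<dots> \<le> exp (a*u)" by (rule exp_ge_add_one_self)
  finally show "1 + 1.6*u \<le> exp (a*u)" .
  have au6: "a*u \<le> 6*u" using u a by simp
  have au: "0 \<le> a*u" "a*u \<le> 6 * (1/24)" using u a mult_mono[of a 6 u "1/24"] by simp_all
  have "exp (a*u) \<le> 1 + a*u + (a*u)^2" using au by (intro exp_bound) auto
  also have "\<dots> \<le> 1 + a*u + a*u * (1/4)"
    using mult_left_mono[OF au(2) au(1)] by (simp add: power2_eq_square)
  also have "\<dots> \<le> 1 + 8*u" using au6 u by simp
  finally show "exp (a*u) \<le> 1 + 8*u" .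
qed

lemma scaled_polar_bounds:
  fixes a t u :: real
  assumes u: "0 < u" "u \<le> 1/24" and a: "1.6 \<le> a" "a \<le> 6" and t: "2*pi \<le> t" "t \<le> 5/2*pi"
  shows "1 + 0.2*u \<le> exp (a*u) * cos (t*u)" "exp (a*u) * cos (t*u) \<le> 1 + 8*u"
    and "6.1*u \<le> exp (a*u) * sin (t*u)" "exp (a*u) * sin (t*u) \<le> 11*u"
proof -
  note exp_lower = exp_mult_small_bounds(1)[OF u a] and exp_upper = exp_mult_small_bounds(2)[OF u a]
  have t_num: "6.28 \<le> t" "t \<le> 7.86" using t pi_approx by simp_all
  have uu: "u*u \<le> 1/576" using u mult_mono[of u "1/24" u "1/24"] by simp
  have tu: "0 \<le> t*u" "t*u \<le> pi" using u t_num pi_gt3 mult_mono[of t "7.86" u "1/24"] by simp_all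
  have t2: "t*t \<le> 62" using t_num mult_mono[of t "7.86" t "7.86"] by simp
  have t3: "t*(t*t) \<le> 488" using t_num t2 mult_mono[of t "7.86" "t*t" 62] by simp
  have "1 - 31*(u*u) \<le> 1 - (t*u)^2/2"
    using mult_right_mono[OF t2, of "u*u"] by (simp add: power2_eq_square algebra_simps)
  then have cos_lower: "1 - 31*(u*u) \<le> cos (t*u)"
    using cos_ge_one_minus_sq_half[of "t*u"] by linarith
  have "31*u + 49.6*(u*u) \<le> 1.4" using u uu by simp
  then have "u * (31*u + 49.6*(u*u)) \<le> u * 1.4" using u by (simp only: mult_left_mono)
  then have "1 + 0.2*u \<le> (1 + 1.6*u) * (1 - 31*(u*u))"
    by (simp add: algebra_simps)
  also have "\<dots> \<le> exp (a*u) * cos (t*u)"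
    using exp_lower cos_lower uu u by (intro mult_mono) auto
  finally show "1 + 0.2*u \<le> exp (a*u) * cos (t*u)" .
  have "exp (a*u) * cos (t*u) \<le> exp (a*u)" by simp
  then show "exp (a*u) * cos (t*u) \<le> 1 + 8*u" using exp_upper by linarith
  have sin_nonneg: "0 \<le> sin (t*u)" using tu by (rule sin_ge_zero)
  have "t*(t*t) * (u*u) \<le> 488 * (1/576)" using t3 uu by (intro mult_mono) auto
  then have "t*(t*t) * (u*u) \<le> 6 * (t - 6.1)" using t_num by simp
  then have "6.1*u \<le> t*u - (t*u)^3/6"
    using mult_right_mono[of "t*(t*t) * (u*u)" "6 * (t - 6.1)" u] u
    by (simp add: power3_eq_cube algebra_simps)
  also have "\<dots> \<le> sin (t*u)" by (rule sin_ge_minus_cube_sixth[OF tu(1)])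
  also have "\<dots> \<le> exp (a*u) * sin (t*u)"
  proof -
    have "1 \<le> exp (a*u)" using exp_lower u by linarith
    then show ?thesis using mult_right_mono[OF _ sin_nonneg] by fastforce
  qed
  finally show "6.1*u \<le> exp (a*u) * sin (t*u)" .
  have "exp (a*u) * sin (t*u) \<le> (1 + 8*u) * (t*u)"
    using exp_upper sin_x_le_x[OF tu(1)] sin_nonneg u by (intro mult_mono) auto
  also have "\<dots> \<le> (1 + 8/24) * 7.86 * u"
    using u t_num mult_mono[of "1 + 8*u" "1 + 8/24" t "7.86"] by (simp add: mult_right_mono)
  also have "\<dots> \<le> 11*u" using u by simp
  finally show "exp (a*u) * sin (t*u) \<le> 11*u" .
qed

lemma exp_one_point_six_le: "exp (1.6::real) \<le> 5.59"
proof -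
  have "0.9 \<le> exp (-0.1::real)" using exp_ge_add_one_self[of "-0.1::real"] by simp
  then have "exp (0.1::real) * 0.9 \<le> exp 0.1 * exp (-0.1)" by (intro mult_left_mono) auto
  then have exp_tenth: "exp (0.1::real) \<le> 10/9" by (simp flip: exp_add)
  have "exp (1.6::real) = exp 0.1 ^ 16" using exp_of_nat_mult[of 16 "0.1::real"] by simp
  also have "\<dots> \<le> (10/9) ^ 16" by (intro power_mono exp_tenth) simp
  also have "\<dots> \<le> 5.59" by (simp add: power_divide)
  finally show ?thesis .
qed

lemma exp_six_ge: "20 \<le> exp (6::real)"
proof -
  have "(3::real) ^ 3 \<le> exp 2 ^ 3" using exp_ge_add_one_self[of "2::real"] by (intro power_mono) auto
  also have "\<dots> = exp 6" using exp_of_nat_mult[of 3 "2::real"] by simp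
  finally show ?thesis by simp
qed

lemma Ln_bounds_rectangle:
  assumes "1 \<le> Re w" "Re w \<le> 9" "5.59 \<le> Im w" "Im w \<le> 11"
  shows "1.6 \<le> Re (Ln w)" "Re (Ln w) \<le> 6" "0 \<le> Im (Ln w)" "Im (Ln w) < pi/2"
proof -
  have w: "w \<noteq> 0" using assms by auto
  have "exp 1.6 \<le> cmod w"
    using exp_one_point_six_le assms(3) abs_Im_le_cmod[of w] by linarith
  then have "1.6 \<le> ln (cmod w)" using w by (subst ln_ge_iff) auto
  then show "1.6 \<le> Re (Ln w)" using w by simp
  have "0 \<le> Im w" using assms(3) by simp
  then have "cmod w \<le> Re w + Im w" using cmod_le[of w] assms(1) by simp
  then have "cmod w \<le> exp 6" using exp_six_ge assms(2,4) by linarith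
  then have "ln (cmod w) \<le> ln (exp 6)" using w by (intro ln_mono) auto
  then show "Re (Ln w) \<le> 6" using w by simp
  show "0 \<le> Im (Ln w)" using Im_Ln_pos_le[OF w] assms by simp
  show "Im (Ln w) < pi/2" using Re_Ln_pos_lt_imp[of w] assms by simp
qed

lemma exp_Ln_div_power:
  assumes "w \<noteq> 0" "n > 0"
  shows "exp ((Ln w + 2 * of_real pi * \<i>) / of_nat n) ^ n = w"
proof -
  have "exp ((Ln w + 2 * of_real pi * \<i>) / of_nat n) ^ n = exp (Ln w + 2 * of_real pi * \<i>)"
    using assms(2) by (simp flip: exp_of_nat_mult)
  also have "\<dots> = w" using assms(1) by (simp add: exp_add)
  finally show ?thesis .
qed

definition root_box :: "real \<Rightarrow> complex set" where
  "root_box u = cbox (Complex (1 + 0.2*u) (6.1*u)) (Complex (1 + 8*u) (11*u))"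

lemma mem_root_box:
  "z \<in> root_box u \<longleftrightarrow> 1 + 0.2*u \<le> Re z \<and> Re z \<le> 1 + 8*u \<and> 6.1*u \<le> Im z \<and> Im z \<le> 11*u"
  unfolding root_box_def cbox_complex_eq by auto

definition root_branch :: "nat \<Rightarrow> complex \<Rightarrow> complex" where
  "root_branch k z = exp ((Ln (of_nat (k+1) * z - of_nat k) + 2 * of_real pi * \<i>) / of_nat (k+3))"

lemma root_box_affine_bounds:
  fixes k :: nat
  assumes k: "k \<ge> 21" and z: "z \<in> root_box (1 / (real k + 3))"
  defines "w \<equiv> of_nat (k+1) * z - of_nat k"
  shows "1 \<le> Re w" "Re w \<le> 9" "5.59 \<le> Im w" "Im w \<le> 11"
proof -
  define u where "u = 1 / (real k + 3)"
  have c: "11/12 \<le> (real k + 1) * u" "(real k + 1) * u \<le> 1"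
    using k by (simp_all add: u_def field_simps)
  have re: "Re w = 1 + (real k + 1) * (Re z - 1)" and im: "Im w = (real k + 1) * Im z"
    by (simp_all add: w_def algebra_simps)
  have z_bounds: "0 \<le> Re z - 1" "Re z - 1 \<le> 8*u" "6.1*u \<le> Im z" "Im z \<le> 11*u"
    using z unfolding mem_root_box u_def by (auto intro: order_trans[rotated])
  show "1 \<le> Re w" unfolding re using z_bounds by simp
  have "(real k + 1) * (Re z - 1) \<le> (real k + 1) * (8*u)" using z_bounds by (intro mult_left_mono) auto
  also have "\<dots> = 8 * ((real k + 1) * u)" by simp
  finally show "Re w \<le> 9" unfolding re using c by linarith
  have "5.59 \<le> 6.1 * ((real k + 1) * u)" using c by simp
  also have "\<dots> = (real k + 1) * (6.1*u)" by simp
  also have "\<dots> \<le> (real k + 1) * Im z" using z_bounds by (intro mult_left_mono) auto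
  finally show "5.59 \<le> Im w" unfolding im .
  have "(real k + 1) * Im z \<le> (real k + 1) * (11*u)" using z_bounds by (intro mult_left_mono) auto
  also have "\<dots> = 11 * ((real k + 1) * u)" by simp
  finally show "Im w \<le> 11" unfolding im using c by linarith
qed

lemma root_branch_maps_root_box:
  fixes k :: nat
  assumes k: "k \<ge> 21" and z: "z \<in> root_box (1 / (real k + 3))"
  shows "root_branch k z \<in> root_box (1 / (real k + 3))"
proof -
  define u where "u = 1 / (real k + 3)"
  define w where "w = of_nat (k+1) * z - of_nat k"
  note w_bounds = root_box_affine_bounds[OF k z, folded w_def]
  have u: "0 < u" "u \<le> 1/24" using k by (simp_all add: u_def field_simps)
  have "w \<noteq> 0" using w_bounds by auto
  then have "Re ((Ln w + 2 * of_real pi * \<i>) / of_nat (k+3)) = Re (Ln w) * u"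
    and "Im ((Ln w + 2 * of_real pi * \<i>) / of_nat (k+3)) = (Im (Ln w) + 2*pi) * u"
    by (simp_all add: u_def add.commute)
  then have "Re (root_branch k z) = exp (Re (Ln w) * u) * cos ((Im (Ln w) + 2*pi) * u)"
    and "Im (root_branch k z) = exp (Re (Ln w) * u) * sin ((Im (Ln w) + 2*pi) * u)"
    by (simp_all add: root_branch_def w_def Re_exp Im_exp)
  moreover note scaled_polar_bounds[OF u Ln_bounds_rectangle(1,2)[OF w_bounds], of "Im (Ln w) + 2*pi"]
  ultimately show ?thesis
    using Ln_bounds_rectangle(3,4)[OF w_bounds] unfolding mem_root_box u_def by simp
qed

lemma continuous_on_root_branch:
  assumes "k \<ge> 21"
  shows "continuous_on (root_box (1 / (real k + 3))) (root_branch k)"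
proof -
  have "of_nat (k+1) * z - of_nat k \<notin> \<real>\<^sub>\<le>\<^sub>0" if "z \<in> root_box (1 / (real k + 3))" for z
    using root_box_affine_bounds[OF assms that] by (auto simp: complex_nonpos_Reals_iff)
  moreover have "complex_of_nat k + 3 \<noteq> 0"
    using of_nat_eq_0_iff[of "k+3", where ?'a = complex] by simp
  ultimately show ?thesis
    unfolding root_branch_def by (intro continuous_intros) auto
qed

lemma trinomial_root_Re_gt_one:
  fixes k :: nat
  assumes k: "k \<ge> 21"
  shows "\<exists>z. z^(k+3) = of_nat (k+1) * z - of_nat k \<and> 1 < Re z"
proof -
  let ?S = "root_box (1 / (real k + 3))"
  have "Complex (1 + 0.2 / (real k + 3)) (6.1 / (real k + 3)) \<in> ?S"
    unfolding mem_root_box by (simp add: field_simps)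
  then obtain z where z: "z \<in> ?S" and fixed: "root_branch k z = z"
    using brouwer[of ?S "root_branch k"] continuous_on_root_branch[OF k] root_branch_maps_root_box[OF k]
    unfolding root_box_def by (auto simp: convex_box)
  define w where "w = of_nat (k+1) * z - of_nat k"
  have "w \<noteq> 0" using root_box_affine_bounds(1)[OF k z, folded w_def] by auto
  have "z^(k+3) = root_branch k z ^ (k+3)" using fixed by simp
  also have "\<dots> = w"
    unfolding root_branch_def w_def[symmetric] by (rule exp_Ln_div_power) (use \<open>w \<noteq> 0\<close> in auto)
  finally have "z^(k+3) = w" .
  moreover have "1 < Re z"
  proof -
    have "0 < 0.2 * (1 / (real k + 3))" by simp
    then show ?thesis using z unfolding mem_root_box by linarith
  qed
  ultimately show ?thesis unfolding w_def by blast
qed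

theorem mainTheorem5:
  fixes k :: nat
  assumes "k > 20"
  shows "\<exists>z. eigenvalue (B_mat k) z \<and> Re z < 0"
proof -
  have "k \<ge> 21" using assms by simp
  then obtain z where root: "z^(k+3) = of_nat (k+1) * z - of_nat k" and "1 < Re z"
    using trinomial_root_Re_gt_one by blast
  then have "eigenvalue (B_mat k) (1 - z)"
    by (intro eigenvalue_B_mat_one_minus_root) auto
  moreover have "Re (1 - z) < 0" using \<open>1 < Re z\<close> by simp
  ultimately show ?thesis by blast
qed

end
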